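(* Let $(b,c,d)\in\bar S$. Then $(b,c,d)$ has no inverse image under $\bar M_B$ in $\bar S$ if and only if one of the following holds: (i) $b,c,d$ are neither all even nor all odd; (ii) $b,c,d$ are all even, but $c\not\equiv 0\pmod 4$ or $d\not\equiv 0\pmod 8$; (iii) $b,c,d$ are all odd, but $-2b+c\not\equiv 1\pmod 4$ or $b-c+d\not\equiv 1\pmod 8$.
   Context: $\bar S$ is the set of all $(b,c,d)\in\mathbb{Z}^3$ with $b^2-3c\le 0$, $d<0$, $1+b+c+d>0$; for $(b,c,d)\in\bar S$, $\pi(b,c,d)$ is the unique real root (in $(0,1)$) of $x^3+bx^2+cx+d$. The map $\bar M_B:\bar S\to\bar S$ is defined by: let $\alpha=\pi(b,c,d)$; if $\alpha\in(0,1/2)$ then $\bar M_B(b,c,d)=(2b,4c,8d)$, and if $\alpha\in(1/2,1)$ then $\bar M_B(b,c,d)=(2b+3,\,4b+4c+3,\,2b+4c+8d+1)$. (This is the conjugate $\pi^{-1}\circ M_B\circ\pi$ of the Bernoulli map $M_B(x)=2x\bmod 1$.) *)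

theory Defs
  imports Complex_Main
begin

definition Sbar :: "(int \<times> int \<times> int) set" where
  "Sbar = {(b, c, d). b^2 - 3*c \<le> 0 \<and> d < 0 \<and> 1 + b + c + d > 0}"

text \<open>The unique real root of x^3 + b x^2 + c x + d (it lies in (0,1) for points of Sbar).\<close>
definition piS :: "int \<times> int \<times> int \<Rightarrow> real" where
  "piS p = (case p of (b, c, d) \<Rightarrow>
     THE x::real. x^3 + of_int b * x^2 + of_int c * x + of_int d = 0)"

text \<open>The conjugated Bernoulli map. The value 1/2 never occurs as a root for
  integer coefficients (1 + 2b + 4c + 8d is odd), so the case split below is exhaustive.\<close>
definition MB :: "int \<times> int \<times> int \<Rightarrow> int \<times> int \<times> int" where
  "MB p = (case p of (b, c, d) \<Rightarrow>
     (if piS (b, c, d) < 1/2 then (2*b, 4*c, 8*d)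
      else (2*b + 3, 4*b + 4*c + 3, 2*b + 4*c + 8*d + 1)))"

end

theory Submission
  imports Defs
begin

text \<open>The two branches of \<open>MB\<close> are the coefficient transformations induced by the substitutions
  \<open>x \<mapsto> 2x\<close> and \<open>x \<mapsto> 2x - 1\<close>: if \<open>r\<close> is the root of the image, the preimage has root \<open>r/2\<close> or
  \<open>(r+1)/2\<close>. The discriminant \<open>b\<^sup>2 - 3c\<close> of the image is four times that of the preimage, so any
  integer preimage of a point of \<open>Sbar\<close> under either branch is again a monotone cubic with a
  root in \<open>(0,1)\<close>, i.e. lies in \<open>Sbar\<close>, and \<open>MB\<close> takes exactly that branch on it. Hence on \<open>Sbar\<close>
  the image of \<open>MB\<close> is the union of the integer images of the two branches, and these are
  cut out by the congruences.\<close>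

definition cubic :: "int \<Rightarrow> int \<Rightarrow> int \<Rightarrow> real \<Rightarrow> real" where
  "cubic b c d x = x^3 + of_int b * x^2 + of_int c * x + of_int d"

definition MB_left :: "int \<times> int \<times> int \<Rightarrow> int \<times> int \<times> int" where
  "MB_left = (\<lambda>(b, c, d). (2*b, 4*c, 8*d))"

definition MB_right :: "int \<times> int \<times> int \<Rightarrow> int \<times> int \<times> int" where
  "MB_right = (\<lambda>(b, c, d). (2*b + 3, 4*b + 4*c + 3, 2*b + 4*c + 8*d + 1))"

lemma cubic_strict_mono:
  assumes "b^2 - 3*c \<le> 0"
  shows "strict_mono (cubic b c d)"
proof (rule strict_monoI)
  fix x y :: real
  assume "x < y"
  have disc: "real_of_int b ^ 2 - 3 * real_of_int c \<le> 0"
    using assms by (metis of_int_le_0_iff of_int_diff of_int_mult of_int_numeral of_int_power)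
  \<comment> \<open>the difference quotient, with the square completed in \<open>x + y\<close>\<close>
  have "x^2 + x*y + y^2 + of_int b * (x+y) + of_int c =
        3/4 * (x + y + 2 * of_int b / 3)^2 + (3 * of_int c - of_int b ^ 2)/3 + (x-y)^2/4"
    by (simp add: power2_eq_square field_simps)
  moreover have "(x - y)^2 > 0" using \<open>x < y\<close> by simp
  moreover have "3/4 * (x + y + 2 * of_int b / 3)^2 \<ge> (0::real)" by simp
  moreover have "(3 * of_int c - of_int b ^ 2) / 3 \<ge> (0::real)" using disc by simp
  ultimately have pos: "x^2 + x*y + y^2 + of_int b * (x+y) + of_int c > 0"
    by linarith
  have "cubic b c d y - cubic b c d x = (y - x) * (x^2 + x*y + y^2 + of_int b * (x+y) + of_int c)"
    unfolding cubic_def by (simp add: power2_eq_square power3_eq_cube algebra_simps)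
  also have "\<dots> > 0" using pos \<open>x < y\<close> by simp
  finally show "cubic b c d x < cubic b c d y" by simp
qed

lemma piS_eq_The: "piS (b, c, d) = (THE x. cubic b c d x = 0)"
  by (simp add: piS_def cubic_def)

lemma piS_eq_root:
  assumes "b^2 - 3*c \<le> 0" "cubic b c d r = 0"
  shows "piS (b, c, d) = r"
proof -
  have "inj (cubic b c d)" using cubic_strict_mono[OF assms(1)] by (rule strict_mono_imp_inj_on)
  then have "x = r" if "cubic b c d x = 0" for x
    using injD that assms(2) by fastforce
  with assms(2) show ?thesis
    unfolding piS_eq_The by (rule the_equality)
qed

lemma Sbar_root:
  assumes "(b, c, d) \<in> Sbar"
  obtains r where "0 < r" "r < 1" "cubic b c d r = 0"
proof -
  have "d < 0" "1 + b + c + d > 0" using assms by (auto simp: Sbar_def)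
  then have f0: "cubic b c d 0 < 0" and f1: "cubic b c d 1 > 0"
    by (simp_all add: cubic_def)
  have "\<exists>x\<ge>0. x \<le> 1 \<and> cubic b c d x = 0"
    using f0 f1 by (intro IVT) (auto simp: cubic_def intro!: continuous_intros)
  then obtain r where "0 \<le> r" "r \<le> 1" "cubic b c d r = 0" by blast
  moreover have "r \<noteq> 0" "r \<noteq> 1" using f0 f1 \<open>cubic b c d r = 0\<close> by auto
  ultimately show ?thesis by (intro that) auto
qed

lemma Sbar_of_root:
  assumes "b^2 - 3*c \<le> 0" "0 < r" "r < 1" "cubic b c d r = 0"
  shows "(b, c, d) \<in> Sbar"
proof -
  have mono: "strict_mono (cubic b c d)" using cubic_strict_mono[OF assms(1)] .
  have "cubic b c d 0 < 0" using strict_monoD[OF mono, of 0 r] assms by simp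
  moreover have "cubic b c d 1 > 0" using strict_monoD[OF mono, of r 1] assms by simp
  ultimately have "d < 0" "1 + b + c + d > 0" by (simp_all add: cubic_def)
  then show ?thesis using assms(1) by (simp add: Sbar_def)
qed

lemma MB_cases: "MB p = MB_left p \<or> MB p = MB_right p"
  by (cases p) (auto simp: MB_def MB_left_def MB_right_def)

lemma MB_left_image_iff:
  "(\<exists>p. MB_left p = (b, c, d)) \<longleftrightarrow>
     even b \<and> even c \<and> even d \<and> c mod 4 = 0 \<and> d mod 8 = 0"
proof
  assume "even b \<and> even c \<and> even d \<and> c mod 4 = 0 \<and> d mod 8 = 0"
  then have "MB_left (b div 2, c div 4, d div 8) = (b, c, d)"
    by (auto simp: MB_left_def dvd_mult_div_cancel mod_eq_0_iff_dvd)
  then show "\<exists>p. MB_left p = (b, c, d)" ..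
qed (auto simp: MB_left_def)

lemma MB_right_image_iff:
  "(\<exists>p. MB_right p = (b, c, d)) \<longleftrightarrow>
     odd b \<and> odd c \<and> odd d \<and> (-2*b + c) mod 4 = 1 \<and> (b - c + d) mod 8 = 1"
proof
  assume "odd b \<and> odd c \<and> odd d \<and> (-2*b + c) mod 4 = 1 \<and> (b - c + d) mod 8 = 1"
  then have b: "odd b" and c: "(-2*b + c) mod 4 = 1" and d: "(b - c + d) mod 8 = 1" by auto
  have "2 dvd b - 3" using b by simp
  moreover have "4 dvd c - 2*b + 3" using c by presburger
  moreover have "8 dvd b - c + d - 1" using d by presburger
  ultimately obtain b' c' d' where "b - 3 = 2*b'" "c - 2*b + 3 = 4*c'" "b - c + d - 1 = 8*d'"
    by (metis dvdE)
  then have "MB_right (b', c', d') = (b, c, d)" by (simp add: MB_right_def)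
  then show "\<exists>p. MB_right p = (b, c, d)" ..
next
  assume "\<exists>p. MB_right p = (b, c, d)"
  then obtain b' c' d' where "b = 2*b' + 3" "c = 4*b' + 4*c' + 3" "d = 2*b' + 4*c' + 8*d' + 1"
    by (auto simp: MB_right_def)
  then show "odd b \<and> odd c \<and> odd d \<and> (-2*b + c) mod 4 = 1 \<and> (b - c + d) mod 8 = 1"
    by presburger
qed

lemma MB_left_preimage:
  assumes "(b, c, d) \<in> Sbar" "MB_left p = (b, c, d)"
  shows "p \<in> Sbar \<and> MB p = (b, c, d)"
proof -
  obtain b' c' d' where p: "p = (b', c', d')" by (cases p)
  have e: "b = 2*b'" "c = 4*c'" "d = 8*d'" using assms(2) p by (auto simp: MB_left_def)
  obtain r where r: "0 < r" "r < 1" "cubic b c d r = 0" using Sbar_root[OF assms(1)] .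
  have disc: "b'^2 - 3*c' \<le> 0" using assms(1) e by (simp add: Sbar_def power2_eq_square)
  have root: "cubic b' c' d' (r/2) = 0"
    using r(3) e by (simp add: cubic_def power2_eq_square power3_eq_cube field_simps)
  have "p \<in> Sbar" using Sbar_of_root[OF disc _ _ root] r p by simp
  moreover have "MB p = (b, c, d)"
    using piS_eq_root[OF disc root] r e p by (simp add: MB_def)
  ultimately show ?thesis ..
qed

lemma MB_right_preimage:
  assumes "(b, c, d) \<in> Sbar" "MB_right p = (b, c, d)"
  shows "p \<in> Sbar \<and> MB p = (b, c, d)"
proof -
  obtain b' c' d' where p: "p = (b', c', d')" by (cases p)
  have e: "b = 2*b' + 3" "c = 4*b' + 4*c' + 3" "d = 2*b' + 4*c' + 8*d' + 1"
    using assms(2) p by (auto simp: MB_right_def)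
  obtain r where r: "0 < r" "r < 1" "cubic b c d r = 0" using Sbar_root[OF assms(1)] .
  have "b^2 - 3*c = 4 * (b'^2 - 3*c')" using e by (simp add: power2_eq_square algebra_simps)
  then have disc: "b'^2 - 3*c' \<le> 0" using assms(1) by (simp add: Sbar_def)
  have "cubic b c d (2*x - 1) = 8 * cubic b' c' d' x" for x
    using e by (simp add: cubic_def power2_eq_square power3_eq_cube algebra_simps)
  from this[of "(r+1)/2"] have root: "cubic b' c' d' ((r+1)/2) = 0"
    using r(3) by (simp add: field_simps)
  have "p \<in> Sbar" using Sbar_of_root[OF disc _ _ root] r p by simp
  moreover have "MB p = (b, c, d)"
    using piS_eq_root[OF disc root] r e p by (simp add: MB_def)
  ultimately show ?thesis ..
qed

lemma MB_image_iff:
  assumes "(b, c, d) \<in> Sbar"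
  shows "(\<exists>p \<in> Sbar. MB p = (b, c, d)) \<longleftrightarrow>
           (\<exists>p. MB_left p = (b, c, d)) \<or> (\<exists>p. MB_right p = (b, c, d))"
proof
  assume "\<exists>p \<in> Sbar. MB p = (b, c, d)"
  then obtain p where "MB p = (b, c, d)" by blast
  then show "(\<exists>p. MB_left p = (b, c, d)) \<or> (\<exists>p. MB_right p = (b, c, d))"
    using MB_cases[of p] by metis
next
  assume "(\<exists>p. MB_left p = (b, c, d)) \<or> (\<exists>p. MB_right p = (b, c, d))"
  then show "\<exists>p \<in> Sbar. MB p = (b, c, d)"
    using MB_left_preimage[OF assms] MB_right_preimage[OF assms] by blast
qed

theorem fact2:
  fixes b c d :: int
  assumes "(b, c, d) \<in> Sbar"
  shows "(\<not> (\<exists>p \<in> Sbar. MB p = (b, c, d))) \<longleftrightarrow>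
    ((\<not> (even b \<and> even c \<and> even d) \<and> \<not> (odd b \<and> odd c \<and> odd d))
     \<or> (even b \<and> even c \<and> even d \<and> (c mod 4 \<noteq> 0 \<or> d mod 8 \<noteq> 0))
     \<or> (odd b \<and> odd c \<and> odd d \<and> ((-2*b + c) mod 4 \<noteq> 1 \<or> (b - c + d) mod 8 \<noteq> 1)))"
  unfolding MB_image_iff[OF assms] MB_left_image_iff MB_right_image_iff by argo

end
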